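(* Let $\theta>0$, $L\ge1$, $K(x,y)=\exp(-\theta|x-y|)$ on $[0,1]$, and $\mathbf V=\operatorname{span}\{K(\cdot,j2^{-L}):j=0,1,\dots,2^L\}$. Then the $2^L+1$ functions $\psi_{01},\psi_{02}$ and $\psi_{lm}$ ($l=1,\dots,L$, $m\in\{1,3,\dots,2^l-1\}$) form an orthonormal basis of $\mathbf V$ with respect to the inner product of the reproducing kernel Hilbert space $\mathcal N_K[0,1]$ of $K$.
   Context: $\mathcal N_K[0,1]$ is the RKHS of $K$ on $[0,1]$, i.e. the completion of finite combinations $\sum_j\beta_jK(\cdot,x_j)$ under $\langle \sum_j\beta_jK(\cdot,x_j),\sum_k\beta'_kK(\cdot,x'_k)\rangle=\sum_{j,k}\beta_j\beta'_kK(x_j,x'_k)$. The functions are $\psi_{01}(x)=\dfrac{e^{-\theta x}+e^{-\theta(1-x)}}{\sqrt{2(1+e^{-\theta})}}$, $\psi_{02}(x)=\dfrac{e^{-\theta x}-e^{-\theta(1-x)}}{\sqrt{2(1-e^{-\theta})}}$, and for $l\ge1$, odd $m\in\{1,\dots,2^l-1\}$: $\psi_{lm}(x)=\sqrt{\tfrac{2}{\sinh(2^{1-l}\theta)}}\sinh(\theta(x-(m-1)2^{-l}))$ on $[(m-1)2^{-l},m2^{-l}]$, $\psi_{lm}(x)=\sqrt{\tfrac{2}{\sinh(2^{1-l}\theta)}}\sinh(\theta((m+1)2^{-l}-x))$ on $[m2^{-l},(m+1)2^{-l}]$, and $0$ elsewhere on $[0,1]$. *)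

theory Defs
  imports "HOL-Analysis.Analysis"
begin

definition Kexp :: "real \<Rightarrow> real \<Rightarrow> real \<Rightarrow> real" where
  "Kexp \<theta> x y = exp (- \<theta> * \<bar>x - y\<bar>)"

definition kernel_comb :: "(real \<Rightarrow> real \<Rightarrow> real) \<Rightarrow> real set \<Rightarrow> (real \<Rightarrow> real) \<Rightarrow> real \<Rightarrow> real" where
  "kernel_comb K X \<beta> = (\<lambda>x. \<Sum>y\<in>X. \<beta> y * K x y)"

text \<open>RKHS inner product of two finite kernel combinations:
  < sum_j beta_j K(.,x_j), sum_k beta'_k K(.,x'_k) > = sum_{j,k} beta_j beta'_k K(x_j,x'_k).\<close>
definition rkhs_ip :: "(real \<Rightarrow> real \<Rightarrow> real) \<Rightarrow> real set \<Rightarrow> (real \<Rightarrow> real) \<Rightarrow> real set \<Rightarrow> (real \<Rightarrow> real) \<Rightarrow> real" where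
  "rkhs_ip K X \<beta> X' \<beta>' = (\<Sum>y\<in>X. \<Sum>y'\<in>X'. \<beta> y * \<beta>' y' * K y y')"

definition grid :: "nat \<Rightarrow> real set" where
  "grid L = {real j / 2 ^ L | j. j \<le> 2 ^ L}"

definition psi01 :: "real \<Rightarrow> real \<Rightarrow> real" where
  "psi01 \<theta> x = (exp (- \<theta> * x) + exp (- \<theta> * (1 - x))) / sqrt (2 * (1 + exp (- \<theta>)))"

definition psi02 :: "real \<Rightarrow> real \<Rightarrow> real" where
  "psi02 \<theta> x = (exp (- \<theta> * x) - exp (- \<theta> * (1 - x))) / sqrt (2 * (1 - exp (- \<theta>)))"

definition psi_lm :: "real \<Rightarrow> nat \<Rightarrow> nat \<Rightarrow> real \<Rightarrow> real" where
  "psi_lm \<theta> l m x =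
     (let a = (real m - 1) / 2 ^ l; b = real m / 2 ^ l; c = (real m + 1) / 2 ^ l;
          s = sqrt (2 / sinh ((2 / 2 ^ l) * \<theta>))
      in if a \<le> x \<and> x \<le> b then s * sinh (\<theta> * (x - a))
         else if b \<le> x \<and> x \<le> c then s * sinh (\<theta> * (c - x))
         else 0)"

datatype basis_idx = I01 | I02 | ILM nat nat

definition basis_fun :: "real \<Rightarrow> basis_idx \<Rightarrow> real \<Rightarrow> real" where
  "basis_fun \<theta> i = (case i of I01 \<Rightarrow> psi01 \<theta> | I02 \<Rightarrow> psi02 \<theta> | ILM l m \<Rightarrow> psi_lm \<theta> l m)"

definition basis_idxs :: "nat \<Rightarrow> basis_idx set" where
  "basis_idxs L = {I01, I02} \<union> {ILM l m | l m. 1 \<le> l \<and> l \<le> L \<and> odd m \<and> 1 \<le> m \<and> m \<le> 2 ^ l - 1}"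

end

theory Submission
  imports Defs "HOL-Library.Function_Algebras"
begin

text \<open>
  Every basis function is a combination of at most three kernel translates at grid points:
  psi01 and psi02 of K(., 0) and K(., 1), and the hat psi_lm with centre u = m 2^-l and
  half-width h = 2^-l equals S (cosh(theta h) K(., u) - (K(., u - h) + K(., u + h)) / 2),
  S its normalising factor. By the reproducing property, the inner product of psi_lm with a
  kernel combination f is S (cosh(theta h) f(u) - (f(u - h) + f(u + h)) / 2), which vanishes as
  soon as f has no node in (u - h, u + h): every exp(-theta |x - p|) with p outside satisfies
  f(u - h) + f(u + h) = 2 cosh(theta h) f(u). The nodes of all other basis functions of the same
  or a coarser level lie outside that interval, so orthogonality follows by symmetry of the
  inner product; the norms are direct computations. Finally, 2^L + 1 orthonormal coefficient
  vectors are linearly independent in the space of functions on the 2^L + 1 grid points, hence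
  span it.
\<close>

section \<open>The exponential kernel and the cosh-mean identity\<close>

lemma Kexp_commute: "Kexp \<theta> x y = Kexp \<theta> y x"
  unfolding Kexp_def by (simp add: abs_minus_commute)

lemma Kexp_cosh_mean:
  assumes "p \<notin> {u - h<..<u + h}" "h \<ge> 0"
  shows "Kexp \<theta> (u - h) p + Kexp \<theta> (u + h) p = 2 * cosh (\<theta> * h) * Kexp \<theta> u p"
proof -
  consider "p \<le> u - h" | "u + h \<le> p"
    using assms by fastforce
  then show ?thesis
  proof cases
    case 1
    then have "\<bar>u - h - p\<bar> = (u - p) - h" "\<bar>u + h - p\<bar> = (u - p) + h" "\<bar>u - p\<bar> = u - p"
      using assms(2) by auto
    then show ?thesis
      unfolding Kexp_def cosh_def by (simp add: algebra_simps flip: exp_add)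
  next
    case 2
    then have "\<bar>u - h - p\<bar> = (p - u) + h" "\<bar>u + h - p\<bar> = (p - u) - h" "\<bar>u - p\<bar> = p - u"
      using assms(2) by auto
    then show ?thesis
      unfolding Kexp_def cosh_def by (simp add: algebra_simps flip: exp_add)
  qed
qed

lemma kernel_comb_cosh_mean:
  assumes "h \<ge> 0" and "\<And>y. y \<in> X \<Longrightarrow> \<beta> y \<noteq> 0 \<Longrightarrow> y \<notin> {u - h<..<u + h}"
  shows "kernel_comb (Kexp \<theta>) X \<beta> (u - h) + kernel_comb (Kexp \<theta>) X \<beta> (u + h)
       = 2 * cosh (\<theta> * h) * kernel_comb (Kexp \<theta>) X \<beta> u"
proof -
  have "\<beta> y * Kexp \<theta> (u - h) y + \<beta> y * Kexp \<theta> (u + h) y = 2 * cosh (\<theta> * h) * (\<beta> y * Kexp \<theta> u y)"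
    if "y \<in> X" for y
    using Kexp_cosh_mean[of y u h \<theta>] assms that
    by (cases "\<beta> y = 0") (auto simp flip: distrib_left simp: algebra_simps)
  then show ?thesis
    unfolding kernel_comb_def by (simp add: sum_distrib_left flip: sum.distrib)
qed

lemma sinh_hat_eq_Kexp_comb:
  assumes "h > 0" "a = b - h" "c = b + h"
  shows "(if a \<le> x \<and> x \<le> b then sinh (\<theta> * (x - a))
          else if b \<le> x \<and> x \<le> c then sinh (\<theta> * (c - x)) else 0)
       = cosh (\<theta> * h) * Kexp \<theta> x b - (Kexp \<theta> x a + Kexp \<theta> x c) / 2"
proof -
  consider "x \<le> a" | "a \<le> x" "x \<le> b" | "b \<le> x" "x \<le> c" | "c \<le> x"
    by linarith
  then show ?thesis
  proof cases
    case 1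
    then have "\<bar>x - b\<bar> = b - x" "\<bar>x - a\<bar> = b - x - h" "\<bar>x - c\<bar> = b - x + h"
      using assms by auto
    with 1 assms show ?thesis
      unfolding Kexp_def cosh_def by (auto simp: algebra_simps simp flip: exp_add)
  next
    case 2
    then have "\<bar>x - b\<bar> = b - x" "\<bar>x - a\<bar> = x - a" "\<bar>x - c\<bar> = c - x"
      using assms by auto
    with 2 assms show ?thesis
      unfolding Kexp_def cosh_def sinh_def by (auto simp: algebra_simps simp flip: exp_add)
  next
    case 3
    then have "\<bar>x - b\<bar> = x - b" "\<bar>x - a\<bar> = x - a" "\<bar>x - c\<bar> = c - x"
      using assms by auto
    with 3 assms show ?thesis
      unfolding Kexp_def cosh_def sinh_def by (auto simp: algebra_simps simp flip: exp_add)
  next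
    case 4
    then have "\<bar>x - b\<bar> = x - b" "\<bar>x - a\<bar> = x - b + h" "\<bar>x - c\<bar> = x - b - h"
      using assms by auto
    with 4 assms show ?thesis
      unfolding Kexp_def cosh_def by (auto simp: algebra_simps simp flip: exp_add)
  qed
qed

lemma rkhs_ip_eq_sum_kernel_comb: "rkhs_ip K X \<alpha> Y \<beta> = (\<Sum>y\<in>X. \<alpha> y * kernel_comb K Y \<beta> y)"
  unfolding rkhs_ip_def kernel_comb_def by (simp add: sum_distrib_left mult.assoc)

lemma rkhs_ip_commute:
  assumes "\<And>x y. K x y = K y x"
  shows "rkhs_ip K X \<alpha> Y \<beta> = rkhs_ip K Y \<beta> X \<alpha>"
  unfolding rkhs_ip_def by (subst sum.swap) (simp add: assms mult.commute)

section \<open>Kernel combinations as vectors\<close>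

interpretation real_fun: vector_space "\<lambda>r (f :: 'a \<Rightarrow> real) x. r * f x"
  by unfold_locales (auto simp: fun_eq_iff algebra_simps)

lemma sum_fun_apply: "(\<Sum>v\<in>S. f v) x = (\<Sum>v\<in>S. f v x)"
  by (induction S rule: infinite_finite_induct) auto

lemma real_fun_sum_scale: "(\<Sum>v\<in>S. (\<lambda>z. u v * v z)) = (\<lambda>z. \<Sum>v\<in>S. u v * v z)"
  by (simp add: fun_eq_iff sum_fun_apply)

lemma kernel_comb_sum:
  "kernel_comb K X (\<lambda>y. \<Sum>v\<in>S. u v * f v y) x = (\<Sum>v\<in>S. u v * kernel_comb K X (f v) x)"
  unfolding kernel_comb_def
  by (simp add: sum_distrib_left sum_distrib_right mult.assoc sum.swap[of _ S])

lemma rkhs_ip_sum_left: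
  "rkhs_ip K X (\<lambda>y. \<Sum>v\<in>S. u v * f v y) Y g = (\<Sum>v\<in>S. u v * rkhs_ip K X (f v) Y g)"
  unfolding rkhs_ip_def
  by (simp add: sum_distrib_left sum_distrib_right mult.assoc sum.swap[of _ S])

lemma rkhs_ip_orthonormal_inj_independent:
  assumes "finite I"
    and orth: "\<And>i j. i \<in> I \<Longrightarrow> j \<in> I \<Longrightarrow> rkhs_ip K X (c i) X (c j) = (if i = j then 1 else 0)"
  shows "inj_on c I" and "real_fun.independent (c ` I)"
proof -
  show inj: "inj_on c I"
  proof (rule inj_onI)
    fix i j assume "i \<in> I" "j \<in> I" "c i = c j"
    then show "i = j"
      using orth[of i i] orth[of j i] by (auto split: if_splits)
  qed
  have "u (c j) = 0" if zero: "(\<Sum>w\<in>c ` I. (\<lambda>z. u w * w z)) = 0" and j: "j \<in> I" for u j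
  proof -
    have "0 = rkhs_ip K X (\<Sum>w\<in>c ` I. (\<lambda>z. u w * w z)) X (c j)"
      unfolding zero by (simp add: rkhs_ip_def)
    also have "\<dots> = (\<Sum>i\<in>I. u (c i) * rkhs_ip K X (c i) X (c j))"
      unfolding real_fun_sum_scale rkhs_ip_sum_left by (simp add: sum.reindex[OF inj])
    also have "\<dots> = (\<Sum>i\<in>I. if i = j then u (c i) else 0)"
      using orth j by (intro sum.cong) auto
    also have "\<dots> = u (c j)"
      using j \<open>finite I\<close> by simp
    finally show ?thesis
      by (rule sym)
  qed
  then show "real_fun.independent (c ` I)"
    using \<open>finite I\<close> by (intro real_fun.independent_if_scalars_zero) auto
qed

lemma (in vector_space) span_subset_span_independent_card:
  assumes "finite T" "S \<subseteq> span T" "independent S" "card T \<le> card S"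
  shows "span T \<subseteq> span S"
proof
  fix a assume a: "a \<in> span T"
  show "a \<in> span S"
  proof (rule ccontr)
    assume "a \<notin> span S"
    then have "independent (insert a S)" "a \<notin> S"
      using assms(3) independent_insertI span_base by blast+
    moreover have "insert a S \<subseteq> span T"
      using a assms(2) by blast
    ultimately have "finite S" "card (insert a S) \<le> card T"
      using independent_span_bound[OF assms(1)] by (auto dest: finite_insert[THEN iffD1])
    then show False
      using assms(4) \<open>a \<notin> S\<close> by simp
  qed
qed

lemma real_fun_span_point_masses:
  assumes "finite X"
  shows "(\<lambda>z. if z \<in> X then f z else 0) \<in> real_fun.span ((\<lambda>y z. of_bool (z = y)) ` X)"
proof -
  have "(\<lambda>z. if z \<in> X then f z else 0) = (\<Sum>y\<in>X. (\<lambda>z. f y * of_bool (z = y)))"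
    using assms by (simp add: fun_eq_iff sum_fun_apply)
  also have "\<dots> \<in> real_fun.span ((\<lambda>y z. of_bool (z = y)) ` X)"
    by (intro real_fun.span_sum real_fun.span_scale real_fun.span_base) auto
  finally show ?thesis .
qed

lemma kernel_comb_span_orthonormal:
  assumes X: "finite X" and I: "finite I" and card: "card X \<le> card I"
    and orth: "\<And>i j. i \<in> I \<Longrightarrow> j \<in> I \<Longrightarrow> rkhs_ip K X (c i) X (c j) = (if i = j then 1 else 0)"
  shows "\<exists>a. \<forall>x. kernel_comb K X \<beta> x = (\<Sum>i\<in>I. a i * kernel_comb K X (c i) x)"
proof -
  txt \<open>Kernel combinations and inner products only see values on X, so we work with the
    restrictions to X, which live in the span of the card X point masses.\<close>
  define cut where "cut f = (\<lambda>z. if z \<in> X then f z else 0)" for f :: "real \<Rightarrow> real"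
  define E where "E = (\<lambda>y z. of_bool (z = y) :: real) ` X"
  define C where "C = (\<lambda>i. cut (c i)) ` I"
  have kernel_comb_cut: "kernel_comb K X (cut f) = kernel_comb K X f" for f
    unfolding kernel_comb_def cut_def by (simp add: fun_eq_iff)
  have "rkhs_ip K X (cut f) X (cut g) = rkhs_ip K X f X g" for f g
    unfolding rkhs_ip_def cut_def by simp
  then have orth_cut: "rkhs_ip K X (cut (c i)) X (cut (c j)) = (if i = j then 1 else 0)"
    if "i \<in> I" "j \<in> I" for i j
    using orth that by simp
  have indep: "inj_on (\<lambda>i. cut (c i)) I" "real_fun.independent C"
    unfolding C_def using rkhs_ip_orthonormal_inj_independent[of I K X "\<lambda>i. cut (c i)"] I orth_cut
    by auto
  have "real_fun.span E \<subseteq> real_fun.span C"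
  proof (rule real_fun.span_subset_span_independent_card)
    show "finite E"
      unfolding E_def using X by simp
    show "C \<subseteq> real_fun.span E"
      unfolding C_def E_def cut_def using real_fun_span_point_masses[OF X] by blast
    show "real_fun.independent C"
      by (rule indep(2))
    show "card E \<le> card C"
      using card card_image_le[OF X, of "\<lambda>y z. of_bool (z = y) :: real"] card_image[OF indep(1)]
      unfolding E_def C_def by linarith
  qed
  moreover have "cut \<beta> \<in> real_fun.span E"
    unfolding cut_def E_def by (rule real_fun_span_point_masses[OF X])
  moreover have "finite C"
    unfolding C_def using I by simp
  ultimately have "cut \<beta> \<in> range (\<lambda>u. \<Sum>v\<in>C. (\<lambda>z. u v * v z))"
    using real_fun.span_finite[of C] by blast
  then obtain u where u: "cut \<beta> = (\<Sum>v\<in>C. (\<lambda>z. u v * v z))"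
    by (rule rangeE)
  show ?thesis
  proof (intro exI[of _ "\<lambda>i. u (cut (c i))"] allI)
    fix x
    have "kernel_comb K X \<beta> x = kernel_comb K X (cut \<beta>) x"
      by (simp add: kernel_comb_cut)
    also have "\<dots> = (\<Sum>v\<in>C. u v * kernel_comb K X v x)"
      unfolding u real_fun_sum_scale kernel_comb_sum ..
    also have "\<dots> = (\<Sum>i\<in>I. u (cut (c i)) * kernel_comb K X (c i) x)"
      unfolding C_def by (simp add: sum.reindex[OF indep(1)] kernel_comb_cut)
    finally show "kernel_comb K X \<beta> x = (\<Sum>i\<in>I. u (cut (c i)) * kernel_comb K X (c i) x)" .
  qed
qed

section \<open>The dyadic grid and the kernel coefficients of the basis\<close>

lemma grid_mem:
  assumes "l \<le> L" "k \<le> 2 ^ l"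
  shows "real k / 2 ^ l \<in> grid L"
proof -
  have pow: "(2::nat) ^ L = 2 ^ l * 2 ^ (L - l)" "(2::real) ^ L = 2 ^ l * 2 ^ (L - l)"
    using assms(1) by (simp_all flip: power_add)
  have "real k / 2 ^ l = real (k * 2 ^ (L - l)) / 2 ^ L"
    by (simp add: pow(2))
  moreover have "k * 2 ^ (L - l) \<le> 2 ^ L"
    using assms(2) pow(1) by simp
  ultimately show ?thesis
    unfolding grid_def by blast
qed

lemma grid_eq_image: "grid L = (\<lambda>j. real j / 2 ^ L) ` {..2 ^ L}"
  unfolding grid_def by auto

lemma finite_grid: "finite (grid L)"
  unfolding grid_eq_image by simp

lemma card_grid_le: "card (grid L) \<le> 2 ^ L + 1"
  unfolding grid_eq_image using card_image_le[of "{..2 ^ L}" "\<lambda>j. real j / 2 ^ L"] by simp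

lemma grid_subset_unit_interval: "grid L \<subseteq> {0..1}"
proof
  fix y assume "y \<in> grid L"
  then obtain j where "y = real j / 2 ^ L" "real j \<le> 2 ^ L"
    unfolding grid_def by (auto simp flip: of_nat_le_iff)
  then show "y \<in> {0..1}" by simp
qed

lemma dyadic_in_open_dyadic_interval:
  fixes k m :: int
  assumes "l' \<le> l" "(m - 1) / 2 ^ l < k / 2 ^ l'" "k / 2 ^ l' < (m + 1) / 2 ^ l"
  shows "k * 2 ^ (l - l') = m"
proof -
  have pow: "(2::real) ^ l = 2 ^ l' * 2 ^ (l - l')"
    using assms(1) by (simp flip: power_add)
  have "k / 2 ^ l' = real_of_int (k * 2 ^ (l - l')) / 2 ^ l"
    by (simp add: pow)
  then have "real_of_int (m - 1) < of_int (k * 2 ^ (l - l'))"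
    "of_int (k * 2 ^ (l - l')) < real_of_int (m + 1)"
    using assms(2,3) by (simp_all add: divide_less_cancel)
  then show ?thesis
    unfolding of_int_less_iff by linarith
qed

definition basis_coeff :: "real \<Rightarrow> basis_idx \<Rightarrow> real \<Rightarrow> real" where
  "basis_coeff \<theta> i = (case i of
      I01 \<Rightarrow> (\<lambda>y. (of_bool (y = 0) + of_bool (y = 1)) / sqrt (2 * (1 + exp (- \<theta>))))
    | I02 \<Rightarrow> (\<lambda>y. (of_bool (y = 0) - of_bool (y = 1)) / sqrt (2 * (1 - exp (- \<theta>))))
    | ILM l m \<Rightarrow> (\<lambda>y. sqrt (2 / sinh ((2 / 2 ^ l) * \<theta>)) *
        (cosh (\<theta> / 2 ^ l) * of_bool (y = real m / 2 ^ l)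
         - (of_bool (y = (real m - 1) / 2 ^ l) + of_bool (y = (real m + 1) / 2 ^ l)) / 2)))"

lemma zero_one_in_grid: "0 \<in> grid L" "1 \<in> grid L"
  using grid_mem[of 0 L 0] grid_mem[of L L "2 ^ L"] by simp_all

lemma ILM_in_basis_idxsD:
  assumes "ILM l m \<in> basis_idxs L"
  shows "1 \<le> l" "l \<le> L" "odd m" "1 \<le> m" "m + 1 \<le> 2 ^ l"
  using assms unfolding basis_idxs_def by auto

lemma hat_nodes_in_grid:
  assumes "ILM l m \<in> basis_idxs L"
  shows "(real m - 1) / 2 ^ l \<in> grid L" "real m / 2 ^ l \<in> grid L" "(real m + 1) / 2 ^ l \<in> grid L"
proof -
  note l = ILM_in_basis_idxsD[OF assms]
  show "(real m - 1) / 2 ^ l \<in> grid L"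
    using grid_mem[of l L "m - 1"] l by simp
  show "(real m + 1) / 2 ^ l \<in> grid L"
    using grid_mem[of l L "m + 1"] l by (simp add: add.commute)
  show "real m / 2 ^ l \<in> grid L"
    using l by (auto intro: grid_mem)
qed

lemma sum_basis_coeff_I01:
  "(\<Sum>y\<in>grid L. basis_coeff \<theta> I01 y * g y) = (g 0 + g 1) / sqrt (2 * (1 + exp (- \<theta>)))"
  unfolding basis_coeff_def basis_idx.case using finite_grid zero_one_in_grid
  by (simp add: sum_divide_distrib[symmetric] distrib_right sum.distrib)

lemma sum_basis_coeff_I02:
  "(\<Sum>y\<in>grid L. basis_coeff \<theta> I02 y * g y) = (g 0 - g 1) / sqrt (2 * (1 - exp (- \<theta>)))"
  unfolding basis_coeff_def basis_idx.case using finite_grid zero_one_in_grid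
  by (simp add: sum_divide_distrib[symmetric] left_diff_distrib sum_subtractf)

lemma sum_basis_coeff_ILM:
  assumes "ILM l m \<in> basis_idxs L"
  shows "(\<Sum>y\<in>grid L. basis_coeff \<theta> (ILM l m) y * g y) =
    sqrt (2 / sinh ((2 / 2 ^ l) * \<theta>)) * (cosh (\<theta> / 2 ^ l) * g (real m / 2 ^ l)
      - (g ((real m - 1) / 2 ^ l) + g ((real m + 1) / 2 ^ l)) / 2)"
proof -
  let ?S = "sqrt (2 / sinh ((2 / 2 ^ l) * \<theta>))" and ?C = "cosh (\<theta> / 2 ^ l)"
  have "basis_coeff \<theta> (ILM l m) y * g y = ?S * (?C * (of_bool (y = real m / 2 ^ l) * g y)
      - (of_bool (y = (real m - 1) / 2 ^ l) * g y + of_bool (y = (real m + 1) / 2 ^ l) * g y) / 2)" for y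
    unfolding basis_coeff_def basis_idx.case by (simp add: algebra_simps)
  then show ?thesis
    using finite_grid hat_nodes_in_grid[OF assms]
    by (simp add: sum_distrib_left[symmetric] sum_divide_distrib[symmetric] sum_subtractf
        sum.distrib)
qed

lemma basis_fun_eq_kernel_comb:
  assumes "i \<in> basis_idxs L" "x \<in> {0..1}"
  shows "basis_fun \<theta> i x = kernel_comb (Kexp \<theta>) (grid L) (basis_coeff \<theta> i) x"
proof (cases i)
  case I01
  then show ?thesis
    using assms(2) unfolding I01 kernel_comb_def sum_basis_coeff_I01
    by (simp add: basis_fun_def psi01_def Kexp_def add_divide_distrib)
next
  case I02
  then show ?thesis
    using assms(2) unfolding I02 kernel_comb_def sum_basis_coeff_I02
    by (simp add: basis_fun_def psi02_def Kexp_def diff_divide_distrib)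
next
  case (ILM l m)
  have "psi_lm \<theta> l m x = sqrt (2 / sinh ((2 / 2 ^ l) * \<theta>)) *
      (cosh (\<theta> / 2 ^ l) * Kexp \<theta> x (real m / 2 ^ l)
       - (Kexp \<theta> x ((real m - 1) / 2 ^ l) + Kexp \<theta> x ((real m + 1) / 2 ^ l)) / 2)"
    using sinh_hat_eq_Kexp_comb[of "1 / 2 ^ l" "(real m - 1) / 2 ^ l" "real m / 2 ^ l"
        "(real m + 1) / 2 ^ l" x \<theta>, symmetric]
    unfolding psi_lm_def Let_def by (simp add: diff_divide_distrib add_divide_distrib)
  then show ?thesis
    using assms(1) unfolding ILM kernel_comb_def sum_basis_coeff_ILM[OF assms(1)[unfolded ILM]]
    by (simp add: basis_fun_def)
qed

section \<open>Orthonormality\<close>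

definition level :: "basis_idx \<Rightarrow> nat" where
  "level i = (case i of ILM l m \<Rightarrow> l | _ \<Rightarrow> 0)"

lemma basis_coeff_support_avoids_hat:
  assumes i: "ILM l m \<in> basis_idxs L" and j: "j \<in> basis_idxs L" "level j \<le> l" "j \<noteq> ILM l m"
    and y: "basis_coeff \<theta> j y \<noteq> 0"
  shows "y \<notin> {(real m - 1) / 2 ^ l<..<(real m + 1) / 2 ^ l}"
proof
  assume y_in: "y \<in> {(real m - 1) / 2 ^ l<..<(real m + 1) / 2 ^ l}"
  have "real (m + 1) \<le> real (2 ^ l)"
    using ILM_in_basis_idxsD(5)[OF i] by (simp only: of_nat_le_iff)
  then have m: "odd m" "1 \<le> m" "real m + 1 \<le> 2 ^ l"
    using ILM_in_basis_idxsD(3,4)[OF i] by simp_all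
  show False
  proof (cases j)
    case I01
    then have "y = 0 \<or> y = 1"
      using y unfolding basis_coeff_def by (auto split: if_splits)
    then show False
      using y_in m by (auto simp: field_simps)
  next
    case I02
    then have "y = 0 \<or> y = 1"
      using y unfolding basis_coeff_def by (auto split: if_splits)
    then show False
      using y_in m by (auto simp: field_simps)
  next
    case (ILM l' m')
    have l': "l' \<le> l" "odd m'"
      using j ILM_in_basis_idxsD(3)[of l' m' L] unfolding ILM level_def by auto
    have "y = (real m' - 1) / 2 ^ l' \<or> y = real m' / 2 ^ l' \<or> y = (real m' + 1) / 2 ^ l'"
      using y unfolding ILM basis_coeff_def by (rule contrapos_np) simp
    then obtain d :: int where d: "d \<in> {-1, 0, 1}" "y = of_int (int m' + d) / 2 ^ l'"
      by (elim disjE) (auto intro: that[of "-1"] that[of 0] that[of 1])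
    have "(int m' + d) * 2 ^ (l - l') = int m"
      using y_in by (intro dyadic_in_open_dyadic_interval l') (simp_all add: d)
    moreover have "even ((int m' + d) * 2 ^ (l - l'))" if "l' < l"
      using that by simp
    moreover have "even (int m' + d)" if "d \<noteq> 0"
      using that d l'(2) by auto
    ultimately have "l' = l" "d = 0"
      using m(1) l'(1) by (fastforce, fastforce)
    then show False
      using j(3) ILM \<open>(int m' + d) * 2 ^ (l - l') = int m\<close> by simp
  qed
qed

lemma rkhs_ip_basis_coeff_eq_sum_basis_fun:
  assumes "j \<in> basis_idxs L"
  shows "rkhs_ip (Kexp \<theta>) (grid L) (basis_coeff \<theta> i) (grid L) (basis_coeff \<theta> j)
       = (\<Sum>y\<in>grid L. basis_coeff \<theta> i y * basis_fun \<theta> j y)"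
  unfolding rkhs_ip_eq_sum_kernel_comb
proof (intro sum.cong refl)
  fix y assume "y \<in> grid L"
  then have "y \<in> {0..1}"
    using grid_subset_unit_interval by blast
  then show "basis_coeff \<theta> i y * kernel_comb (Kexp \<theta>) (grid L) (basis_coeff \<theta> j) y
      = basis_coeff \<theta> i y * basis_fun \<theta> j y"
    using basis_fun_eq_kernel_comb[OF assms] by simp
qed

lemma rkhs_ip_basis_coeff_level_zero:
  assumes "\<theta> > 0" "i \<in> {I01, I02}" "j \<in> {I01, I02}"
  shows "rkhs_ip (Kexp \<theta>) (grid L) (basis_coeff \<theta> i) (grid L) (basis_coeff \<theta> j)
       = (if i = j then 1 else 0)"
proof -
  have "j \<in> basis_idxs L"
    using assms(3) unfolding basis_idxs_def by auto
  moreover have "2 * p / sqrt (2 * p) / sqrt (2 * p) = 1" if "p > 0" for p :: real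
    using that by simp
  moreover have "1 + exp (- \<theta>) > 0" "1 - exp (- \<theta>) > 0"
    using assms(1) by (simp_all add: add_pos_pos)
  moreover have "basis_fun \<theta> I01 0 = (1 + exp (- \<theta>)) / sqrt (2 * (1 + exp (- \<theta>)))"
    "basis_fun \<theta> I01 1 = (1 + exp (- \<theta>)) / sqrt (2 * (1 + exp (- \<theta>)))"
    "basis_fun \<theta> I02 0 = (1 - exp (- \<theta>)) / sqrt (2 * (1 - exp (- \<theta>)))"
    "basis_fun \<theta> I02 1 = - (1 - exp (- \<theta>)) / sqrt (2 * (1 - exp (- \<theta>)))"
    unfolding basis_fun_def psi01_def psi02_def by (simp_all add: add.commute)
  ultimately show ?thesis
    using assms(2,3)
    by (auto simp: rkhs_ip_basis_coeff_eq_sum_basis_fun sum_basis_coeff_I01 sum_basis_coeff_I02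
        simp flip: add_divide_distrib diff_divide_distrib mult_2)
qed

lemma rkhs_ip_basis_coeff_hat_self:
  assumes "\<theta> > 0" "ILM l m \<in> basis_idxs L"
  shows "rkhs_ip (Kexp \<theta>) (grid L) (basis_coeff \<theta> (ILM l m)) (grid L) (basis_coeff \<theta> (ILM l m))
       = 1"
proof -
  let ?S = "sqrt (2 / sinh ((2 / 2 ^ l) * \<theta>))"
  have "real m / 2 ^ l - (real m - 1) / 2 ^ l = 1 / 2 ^ l" "real m / 2 ^ l < (real m + 1) / 2 ^ l"
    by (simp_all add: diff_divide_distrib divide_strict_right_mono)
  then have vals: "psi_lm \<theta> l m ((real m - 1) / 2 ^ l) = 0"
    "psi_lm \<theta> l m ((real m + 1) / 2 ^ l) = 0"
    "psi_lm \<theta> l m (real m / 2 ^ l) = ?S * sinh (\<theta> / 2 ^ l)"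
    unfolding psi_lm_def Let_def by (simp_all add: divide_right_mono)
  have "(2 / 2 ^ l) * \<theta> > 0"
    using assms(1) by (intro mult_pos_pos divide_pos_pos) simp_all
  then have "sinh ((2 / 2 ^ l) * \<theta>) > 0"
    by simp
  moreover have "sinh ((2 / 2 ^ l) * \<theta>) = 2 * sinh (\<theta> / 2 ^ l) * cosh (\<theta> / 2 ^ l)"
    using sinh_double[of "\<theta> / 2 ^ l"] by simp
  ultimately have "?S * (cosh (\<theta> / 2 ^ l) * (?S * sinh (\<theta> / 2 ^ l))) = 1"
    by (simp add: real_sqrt_mult[symmetric] field_simps)
  then show ?thesis
    using assms(2)
    by (simp add: rkhs_ip_basis_coeff_eq_sum_basis_fun sum_basis_coeff_ILM basis_fun_def vals)
qed

lemma rkhs_ip_basis_coeff_hat_orthogonal: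
  assumes i: "ILM l m \<in> basis_idxs L" and j: "j \<in> basis_idxs L" "level j \<le> l" "j \<noteq> ILM l m"
  shows "rkhs_ip (Kexp \<theta>) (grid L) (basis_coeff \<theta> (ILM l m)) (grid L) (basis_coeff \<theta> j) = 0"
proof -
  let ?g = "kernel_comb (Kexp \<theta>) (grid L) (basis_coeff \<theta> j)"
  define u h where "u = real m / 2 ^ l" and "h = 1 / (2 ^ l :: real)"
  have nodes: "(real m - 1) / 2 ^ l = u - h" "(real m + 1) / 2 ^ l = u + h"
    "\<theta> / 2 ^ l = \<theta> * h"
    unfolding u_def h_def by (simp_all add: diff_divide_distrib add_divide_distrib)
  have "?g (u - h) + ?g (u + h) = 2 * cosh (\<theta> * h) * ?g u"
    using basis_coeff_support_avoids_hat[OF i j] unfolding nodes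
    by (intro kernel_comb_cosh_mean) (auto simp: h_def)
  then show ?thesis
    unfolding rkhs_ip_eq_sum_kernel_comb sum_basis_coeff_ILM[OF i] nodes u_def[symmetric] by simp
qed

lemma rkhs_ip_basis_coeff_orthonormal:
  assumes "\<theta> > 0" "i \<in> basis_idxs L" "j \<in> basis_idxs L"
  shows "rkhs_ip (Kexp \<theta>) (grid L) (basis_coeff \<theta> i) (grid L) (basis_coeff \<theta> j) = (if i = j then 1 else 0)"
proof -
  have level_ordered: "rkhs_ip (Kexp \<theta>) (grid L) (basis_coeff \<theta> i) (grid L) (basis_coeff \<theta> j)
      = (if i = j then 1 else 0)"
    if i: "i \<in> basis_idxs L" and j: "j \<in> basis_idxs L" and le: "level j \<le> level i" for i j
  proof (cases i)
    case (ILM l m)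
    then show ?thesis
      using i j le rkhs_ip_basis_coeff_hat_self[OF assms(1)] rkhs_ip_basis_coeff_hat_orthogonal
      by (auto simp: level_def)
  qed (use i j le ILM_in_basis_idxsD(1) rkhs_ip_basis_coeff_level_zero[OF assms(1)] in
      \<open>auto simp: level_def basis_idxs_def split: basis_idx.splits\<close>)
  show ?thesis
  proof (cases "level j \<le> level i")
    case False
    then show ?thesis
      using level_ordered[OF assms(3,2)] rkhs_ip_commute[OF Kexp_commute] by auto
  qed (use level_ordered[OF assms(2,3)] in simp)
qed

section \<open>Counting the basis\<close>

lemma card_odd_less_double: "card {m :: nat. odd m \<and> m < 2 * n} = n"
proof -
  have "{m :: nat. odd m \<and> m < 2 * n} = (\<lambda>k. 2 * k + 1) ` {..<n}"
    by (auto elim!: oddE)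
  then show ?thesis
    by (simp add: card_image inj_on_def)
qed

lemma basis_idxs_Suc:
  "basis_idxs (Suc L) = basis_idxs L \<union> ILM (Suc L) ` {m. odd m \<and> m < 2 ^ Suc L}"
proof -
  have "odd m \<and> 1 \<le> m \<and> m \<le> 2 ^ l - 1 \<longleftrightarrow> odd m \<and> m < 2 ^ l" for l m :: nat
    using odd_pos[of m] by (auto simp: Suc_le_eq)
  then show ?thesis
    unfolding basis_idxs_def by (auto simp: le_Suc_eq)
qed

lemma card_basis_idxs: "card (basis_idxs L) = 2 ^ L + 1"
proof (induction L)
  case 0
  have "basis_idxs 0 = {I01, I02}"
    unfolding basis_idxs_def by auto
  then show ?case by simp
next
  case (Suc L)
  have "finite (basis_idxs L)"
    using Suc.IH by (simp add: card_ge_0_finite)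
  moreover have "basis_idxs L \<inter> ILM (Suc L) ` {m. odd m \<and> m < 2 ^ Suc L} = {}"
    unfolding basis_idxs_def by auto
  moreover have "card (ILM (Suc L) ` {m. odd m \<and> m < 2 ^ Suc L}) = 2 ^ L"
    using card_odd_less_double[of "2 ^ L"] by (simp add: card_image inj_on_def)
  ultimately show ?case
    unfolding basis_idxs_Suc using Suc.IH by (simp add: card_Un_disjoint)
qed

theorem mainTheorem2:
  fixes \<theta> :: real and L :: nat
  assumes "\<theta> > 0" and "L \<ge> 1"
  shows "card (basis_idxs L) = 2 ^ L + 1 \<and>
    (\<exists>c :: basis_idx \<Rightarrow> real \<Rightarrow> real.
       (\<forall>i\<in>basis_idxs L. \<forall>x\<in>{0..1}.
          basis_fun \<theta> i x = kernel_comb (Kexp \<theta>) (grid L) (c i) x) \<and>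
       (\<forall>i\<in>basis_idxs L. \<forall>j\<in>basis_idxs L.
          rkhs_ip (Kexp \<theta>) (grid L) (c i) (grid L) (c j) = (if i = j then 1 else 0)) \<and>
       (\<forall>\<beta> :: real \<Rightarrow> real. \<exists>a :: basis_idx \<Rightarrow> real. \<forall>x\<in>{0..1}.
          kernel_comb (Kexp \<theta>) (grid L) \<beta> x = (\<Sum>i\<in>basis_idxs L. a i * basis_fun \<theta> i x)))"
proof (intro conjI exI[of _ "basis_coeff \<theta>"] ballI allI)
  show card: "card (basis_idxs L) = 2 ^ L + 1"
    by (rule card_basis_idxs)
  show rep: "basis_fun \<theta> i x = kernel_comb (Kexp \<theta>) (grid L) (basis_coeff \<theta> i) x"
    if "i \<in> basis_idxs L" "x \<in> {0..1}" for i x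
    using basis_fun_eq_kernel_comb that .
  show orth: "rkhs_ip (Kexp \<theta>) (grid L) (basis_coeff \<theta> i) (grid L) (basis_coeff \<theta> j)
      = (if i = j then 1 else 0)"
    if "i \<in> basis_idxs L" "j \<in> basis_idxs L" for i j
    using rkhs_ip_basis_coeff_orthonormal assms(1) that .
  fix \<beta> :: "real \<Rightarrow> real"
  have "finite (basis_idxs L)"
    using card by (simp add: card_ge_0_finite)
  then obtain a where a: "\<And>x. kernel_comb (Kexp \<theta>) (grid L) \<beta> x
      = (\<Sum>i\<in>basis_idxs L. a i * kernel_comb (Kexp \<theta>) (grid L) (basis_coeff \<theta> i) x)"
    using kernel_comb_span_orthonormal[OF finite_grid _ _ orth] card_grid_le card by fastforce
  show "\<exists>a. \<forall>x\<in>{0..1}.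
      kernel_comb (Kexp \<theta>) (grid L) \<beta> x = (\<Sum>i\<in>basis_idxs L. a i * basis_fun \<theta> i x)"
    using a rep by (auto intro!: exI[of _ a] sum.cong)
qed

end
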